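(* Let $q$ be a prime power and $m>1$ an integer. Let $L_1(x),L_2(x)\in\mathbf{F}_q[x]$ be linearized polynomials, let $h(x)\in\mathbf{F}_q[x]$ and $\gamma\in\mathbf{F}_{q^m}$. Then $$F(x):=L_1(x)+\bigl(L_2(x)+\gamma\bigr)h\bigl(\mathrm{Tr}_{\mathbf{F}_{q^m}/\mathbf{F}_q}(x)\bigr)$$ is a permutation polynomial of $\mathbf{F}_{q^m}$ if and only if both of the following hold: (1) $L_1(x)+\bigl(L_2(x)+\mathrm{Tr}_{\mathbf{F}_{q^m}/\mathbf{F}_q}(\gamma)\bigr)h(x)\in\mathbf{F}_q[x]$ is a permutation polynomial of $\mathbf{F}_q$; (2) for every $y\in\mathbf{F}_q$, an element $x\in\mathbf{F}_{q^m}$ satisfies both $L_1(x)+L_2(x)h(y)=0$ and $\mathrm{Tr}_{\mathbf{F}_{q^m}/\mathbf{F}_q}(x)=0$ if and only if $x=0$.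
   Context: $\mathrm{Tr}_{\mathbf{F}_{q^m}/\mathbf{F}_q}(x)=x+x^q+\cdots+x^{q^{m-1}}$. A linearized polynomial with coefficients in $\mathbf{F}_q$ is a polynomial of the form $\sum_{i=0}^{m-1}a_i x^{q^i}$ with $a_i\in\mathbf{F}_q$. A permutation polynomial of a finite field $K$ is a polynomial inducing a bijection $K\to K$. *)

theory Defs
  imports "HOL-Computational_Algebra.Polynomial" "HOL-Computational_Algebra.Primes"
begin

text \<open>The ambient field F_{q^m} is a finite field type 'a with CARD('a) = q^m.
  The subfield F_q is the set of fixed points of x |-> x^q.\<close>
definition subfield_Fq :: "nat \<Rightarrow> 'a::{field,finite} set" where
  "subfield_Fq q = {x. x ^ q = x}"

definition trace_Fq :: "nat \<Rightarrow> nat \<Rightarrow> 'a::{field,finite} \<Rightarrow> 'a" where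
  "trace_Fq q m x = (\<Sum>i<m. x ^ (q ^ i))"

definition linearized :: "nat \<Rightarrow> nat \<Rightarrow> (nat \<Rightarrow> 'a::{field,finite}) \<Rightarrow> 'a \<Rightarrow> 'a" where
  "linearized q m a x = (\<Sum>i<m. a i * x ^ (q ^ i))"

definition is_perm_on :: "'a set \<Rightarrow> ('a \<Rightarrow> 'a) \<Rightarrow> bool" where
  "is_perm_on K f = bij_betw f K K"

definition prime_power :: "nat \<Rightarrow> bool" where
  "prime_power q = (\<exists>p k. prime p \<and> k > 0 \<and> q = p ^ k)"

end

theory Submission
  imports Defs
begin

text \<open>
  The trace is additive and onto \<open>F\<^sub>q\<close>, it commutes with linearized polynomials having
  coefficients in \<open>F\<^sub>q\<close>, and so \<open>Tr(F(x)) = g(Tr(x))\<close> where \<open>g\<close> is the polynomial of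
  condition (1). On a fibre \<open>x + ker Tr\<close> the map \<open>F\<close> is the translate of the additive map
  \<open>d \<mapsto> L\<^sub>1(d) + L\<^sub>2(d) h(Tr x)\<close>. Hence \<open>F\<close> is injective exactly when \<open>g\<close> permutes the
  fibres, i.e.\ \<open>F\<^sub>q\<close>, and each of these additive maps is injective on \<open>ker Tr\<close>,
  which is condition (2).
\<close>

lemma bij_iff_bij_on_fibres:
  fixes F :: "'a::{ab_group_add,finite} \<Rightarrow> 'a" and T :: "'a \<Rightarrow> 'b::ab_group_add"
    and g :: "'b \<Rightarrow> 'b" and D :: "'b \<Rightarrow> 'a \<Rightarrow> 'a"
  assumes T_add: "\<And>x y. T (x + y) = T x + T y"
    and T_F: "\<And>x. T (F x) = g (T x)"
    and F_shift: "\<And>x d. T d = 0 \<Longrightarrow> F (x + d) = F x + D (T x) d"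
    and D_0: "\<And>y. D y 0 = 0"
  shows "bij F \<longleftrightarrow>
    bij_betw g (range T) (range T) \<and> (\<forall>y\<in>range T. \<forall>d. (D y d = 0 \<and> T d = 0) \<longleftrightarrow> d = 0)"
proof
  assume "bij F"
  then have inj: "inj F" and surj: "surj F" by (simp_all add: bij_is_inj bij_is_surj)
  have image: "g ` range T = range T"
  proof
    show "g ` range T \<subseteq> range T" by (auto simp flip: T_F)
    show "range T \<subseteq> g ` range T"
    proof
      fix z assume "z \<in> range T"
      then obtain x where "z = T (F x)" using surj by (metis rangeE surjD)
      then show "z \<in> g ` range T" by (simp add: T_F)
    qed
  qed
  then have "inj_on g (range T)" by (simp add: eq_card_imp_inj_on)
  with image have "bij_betw g (range T) (range T)" by (simp add: bij_betw_def)
  moreover have "d = 0" if "D (T x) d = 0" "T d = 0" for x d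
  proof -
    have "F (x + d) = F x" using F_shift[of d x] that by simp
    then show "d = 0" using inj by (metis add_cancel_left_right injD)
  qed
  ultimately show "bij_betw g (range T) (range T) \<and>
      (\<forall>y\<in>range T. \<forall>d. (D y d = 0 \<and> T d = 0) \<longleftrightarrow> d = 0)"
    using D_0 T_add[of 0 0] by auto
next
  assume "bij_betw g (range T) (range T) \<and>
      (\<forall>y\<in>range T. \<forall>d. (D y d = 0 \<and> T d = 0) \<longleftrightarrow> d = 0)"
  then have inj_g: "inj_on g (range T)"
    and kernel: "\<And>x d. D (T x) d = 0 \<Longrightarrow> T d = 0 \<Longrightarrow> d = 0"
    by (auto simp: bij_betw_def)
  have "inj F"
  proof (rule injI)
    fix x x' assume eq: "F x = F x'"
    define d where "d = x - x'"
    have x: "x = x' + d" by (simp add: d_def)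
    have "g (T x) = g (T x')" by (simp flip: T_F add: eq)
    then have "T x = T x'" using inj_g by (auto dest: inj_onD)
    then have Td: "T d = 0" by (simp add: x T_add)
    then have "D (T x') d = 0" using F_shift[OF Td, of x'] eq by (simp add: x)
    then show "x = x'" using kernel[OF _ Td] x by simp
  qed
  then show "bij F" by (simp add: bij_def finite_UNIV_inj_surj)
qed

lemma power_card_eq_self:
  fixes x :: "'a::{field,finite}"
  shows "x ^ card (UNIV :: 'a set) = x"
proof (cases "x = 0")
  case False
  let ?U = "UNIV - {0 :: 'a}"
  have "x ^ card ?U * \<Prod>?U = (\<Prod>y\<in>?U. x * y)" by (simp add: prod.distrib)
  also have "\<dots> = \<Prod>?U"
    by (rule prod.reindex_bij_witness[of _ "(*) (inverse x)" "(*) x"]) (use False in auto)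
  finally have "x ^ card ?U = 1" by simp
  moreover have "card (UNIV :: 'a set) = Suc (card ?U)"
    by (simp add: card_Diff_singleton card_gt_0_iff)
  ultimately show ?thesis by (simp only: power_Suc mult_1_right)
qed (simp add: card_gt_0_iff)

lemma CHAR_dvd_card: "CHAR('a::{field,finite}) dvd card (UNIV :: 'a set)"
proof -
  \<comment> \<open>Translation by \<open>1\<close> permutes the field.\<close>
  have "(\<Sum>x\<in>UNIV. x + 1) = (\<Sum>x\<in>UNIV. x :: 'a)"
    by (rule sum.reindex_bij_witness[of _ "\<lambda>y. y - 1" "\<lambda>y. y + 1"]) auto
  then have "of_nat (card (UNIV :: 'a set)) = (0 :: 'a)" by (simp add: sum.distrib)
  then show ?thesis by (simp add: of_nat_eq_0_iff_char_dvd)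
qed

lemma prime_CHAR: "prime CHAR('a::{field,finite})"
  by (simp add: prime_CHAR_semidom finite_imp_CHAR_pos)

lemma prime_power_card_imp_CHAR_power:
  assumes "prime_power q" and "card (UNIV :: 'a::{field,finite} set) = q ^ m"
  obtains k where "q = CHAR('a) ^ k"
proof -
  obtain p j where p: "prime p" "q = p ^ j" using assms(1) by (auto simp: prime_power_def)
  have "CHAR('a) dvd p ^ (j * m)" using CHAR_dvd_card assms(2) p(2) by (metis power_mult)
  then have "CHAR('a) = p" using prime_CHAR p(1) prime_dvd_power primes_dvd_imp_eq by blast
  then show ?thesis using p(2) that by blast
qed

context
  fixes q k :: nat
  assumes q_CHAR_power: "q = CHAR('a::{field,finite}) ^ k"
begin

lemma q_pos: "q > 0"
  by (simp add: q_CHAR_power finite_imp_CHAR_pos)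

lemma add_power_q_power: "(x + y :: 'a) ^ (q ^ i) = x ^ (q ^ i) + y ^ (q ^ i)"
  by (rule freshmans_dream'[OF prime_CHAR, of _ "k * i"]) (simp add: q_CHAR_power power_mult)

lemma sum_power_q_power: "(sum f A :: 'a) ^ (q ^ i) = (\<Sum>j\<in>A. f j ^ (q ^ i))"
  by (rule freshmans_dream_sum'[OF prime_CHAR, of _ "k * i"]) (simp add: q_CHAR_power power_mult)

lemma subfield_Fq_add: "x \<in> subfield_Fq q \<Longrightarrow> y \<in> subfield_Fq q \<Longrightarrow> (x + y :: 'a) \<in> subfield_Fq q"
  using add_power_q_power[of x y 1] by (simp add: subfield_Fq_def)

lemma subfield_Fq_mult: "x \<in> subfield_Fq q \<Longrightarrow> y \<in> subfield_Fq q \<Longrightarrow> (x * y :: 'a) \<in> subfield_Fq q"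
  by (simp add: subfield_Fq_def power_mult_distrib)

lemma subfield_Fq_divide: "x \<in> subfield_Fq q \<Longrightarrow> y \<in> subfield_Fq q \<Longrightarrow> (x / y :: 'a) \<in> subfield_Fq q"
  by (simp add: subfield_Fq_def power_divide)

lemma subfield_Fq_power: "x \<in> subfield_Fq q \<Longrightarrow> (x ^ n :: 'a) \<in> subfield_Fq q"
  by (simp add: subfield_Fq_def) (metis mult.commute power_mult)

lemma zero_in_subfield_Fq: "(0 :: 'a) \<in> subfield_Fq q"
  by (simp add: subfield_Fq_def q_pos zero_power)

lemma subfield_Fq_sum:
  "(\<And>i. i \<in> A \<Longrightarrow> f i \<in> subfield_Fq q) \<Longrightarrow> (\<Sum>i\<in>A. f i :: 'a) \<in> subfield_Fq q"
  by (induction A rule: infinite_finite_induct)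
    (simp_all add: zero_in_subfield_Fq subfield_Fq_add)

lemma poly_in_subfield_Fq:
  "(\<And>i. coeff p i \<in> subfield_Fq q) \<Longrightarrow> x \<in> subfield_Fq q \<Longrightarrow> poly p (x :: 'a) \<in> subfield_Fq q"
  unfolding poly_altdef by (intro subfield_Fq_sum subfield_Fq_mult subfield_Fq_power)

lemma subfield_Fq_power_q_power: "c \<in> subfield_Fq q \<Longrightarrow> (c :: 'a) ^ (q ^ i) = c"
  by (induction i) (simp_all add: subfield_Fq_def power_mult flip: mult.commute[of q])

lemma trace_Fq_0: "trace_Fq q m (0 :: 'a) = 0"
  by (simp add: trace_Fq_def q_pos zero_power)

lemma trace_Fq_add: "trace_Fq q m (x + y :: 'a) = trace_Fq q m x + trace_Fq q m y"
  by (simp add: trace_Fq_def add_power_q_power sum.distrib)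

lemma trace_Fq_sum: "trace_Fq q m (sum f A :: 'a) = (\<Sum>i\<in>A. trace_Fq q m (f i))"
  by (induction A rule: infinite_finite_induct) (simp_all add: trace_Fq_0 trace_Fq_add)

lemma trace_Fq_scale: "c \<in> subfield_Fq q \<Longrightarrow> trace_Fq q m (c * x :: 'a) = c * trace_Fq q m x"
  by (simp add: trace_Fq_def power_mult_distrib subfield_Fq_power_q_power sum_distrib_left)

lemma trace_Fq_power_q_power: "trace_Fq q m (x ^ (q ^ j) :: 'a) = trace_Fq q m x ^ (q ^ j)"
  by (simp add: trace_Fq_def sum_power_q_power flip: power_mult) (simp add: mult.commute)

lemma linearized_0: "linearized q m a (0 :: 'a) = 0"
  by (simp add: linearized_def q_pos zero_power)

lemma linearized_add: "linearized q m a (x + y :: 'a) = linearized q m a x + linearized q m a y"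
  by (simp add: linearized_def add_power_q_power sum.distrib distrib_left)

lemma trace_Fq_linearized:
  "\<forall>i<m. a i \<in> subfield_Fq q \<Longrightarrow>
    trace_Fq q n (linearized q m a x :: 'a) = linearized q m a (trace_Fq q n x)"
  by (simp add: linearized_def trace_Fq_sum trace_Fq_scale trace_Fq_power_q_power)

context
  fixes m :: nat
  assumes card_q_power: "card (UNIV :: 'a set) = q ^ m"
begin

lemma one_less_q: "1 < q"
proof (rule ccontr)
  assume "\<not> 1 < q"
  then have "card (UNIV :: 'a set) = 1" using card_q_power q_pos by simp
  then have "(0 :: 'a) = 1" by (metis UNIV_I card_1_singletonE singletonD)
  then show False by simp
qed

lemma trace_Fq_in_subfield_Fq: "trace_Fq q m (x :: 'a) \<in> subfield_Fq q"
proof -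
  let ?f = "\<lambda>i. x ^ (q ^ i)"
  have "trace_Fq q m x ^ q = (\<Sum>i<m. ?f (Suc i))"
    using sum_power_q_power[of ?f "{..<m}" 1]
    by (simp add: trace_Fq_def power_Suc2 del: power_Suc flip: power_mult)
  also have "\<dots> = (\<Sum>i<Suc m. ?f i) - ?f 0" by (simp only: sum.lessThan_Suc_shift) simp
  also have "\<dots> = (\<Sum>i<m. ?f i)"
    \<comment> \<open>\<open>x\<^bsup>q\<^sup>m\<^esup> = x\<close>, so the Frobenius merely shifts the summands cyclically.\<close>
    using power_card_eq_self[of x] by (simp add: card_q_power)
  finally show ?thesis by (simp add: subfield_Fq_def trace_Fq_def)
qed

lemma trace_Fq_not_identically_zero:
  assumes "m > 0"
  shows "\<exists>x :: 'a. trace_Fq q m x \<noteq> 0"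
proof (rule ccontr)
  assume "\<nexists>x :: 'a. trace_Fq q m x \<noteq> 0"
  then have roots: "poly (\<Sum>i<m. monom 1 (q ^ i)) x = 0" for x :: 'a
    by (simp add: trace_Fq_def poly_sum poly_monom)
  have "q ^ i = 1 \<longleftrightarrow> i = 0" for i using one_less_q by simp
  then have "coeff (\<Sum>i<m. monom (1 :: 'a) (q ^ i)) 1 = 1"
    using assms by (simp add: coeff_sum coeff_monom sum.delta)
  then have nonzero: "(\<Sum>i<m. monom (1 :: 'a) (q ^ i)) \<noteq> 0" by auto
  have "degree (\<Sum>i<m. monom (1 :: 'a) (q ^ i)) \<le> q ^ (m - 1)"
    using q_pos by (intro degree_sum_le) (auto simp: degree_monom_eq intro!: power_increasing)
  then have "card (UNIV :: 'a set) \<le> q ^ (m - 1)"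
    using card_poly_roots_bound[OF nonzero] roots by simp
  moreover have "q ^ (m - 1) < q ^ m" using one_less_q assms by (intro power_strict_increasing) auto
  ultimately show False by (simp add: card_q_power)
qed

lemma range_trace_Fq: "m > 0 \<Longrightarrow> range (trace_Fq q m :: 'a \<Rightarrow> 'a) = subfield_Fq q"
proof (intro equalityI subsetI)
  fix y :: 'a assume "m > 0" "y \<in> subfield_Fq q"
  then obtain x :: 'a where x: "trace_Fq q m x \<noteq> 0" using trace_Fq_not_identically_zero by blast
  have "y / trace_Fq q m x \<in> subfield_Fq q"
    using \<open>y \<in> subfield_Fq q\<close> by (intro subfield_Fq_divide trace_Fq_in_subfield_Fq)
  then have "trace_Fq q m (y / trace_Fq q m x * x) = y / trace_Fq q m x * trace_Fq q m x"
    by (rule trace_Fq_scale)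
  then have "trace_Fq q m (y / trace_Fq q m x * x) = y" using x by simp
  then show "y \<in> range (trace_Fq q m)" by (metis rangeI)
qed (auto intro: trace_Fq_in_subfield_Fq)

end

end

theorem corollary2p1:
  fixes q m :: nat and a1 a2 :: "nat \<Rightarrow> 'a::{field,finite}"
    and h :: "'a poly" and \<gamma> :: 'a
  assumes "prime_power q" and "m > 1" and "card (UNIV :: 'a set) = q ^ m"
    and "\<forall>i<m. a1 i \<in> subfield_Fq q"
    and "\<forall>i<m. a2 i \<in> subfield_Fq q"
    and "\<forall>i. coeff h i \<in> subfield_Fq q"
  shows "is_perm_on UNIV
           (\<lambda>x. linearized q m a1 x + (linearized q m a2 x + \<gamma>) * poly h (trace_Fq q m x))
    \<longleftrightarrow>
         (is_perm_on (subfield_Fq q)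
            (\<lambda>x. linearized q m a1 x + (linearized q m a2 x + trace_Fq q m \<gamma>) * poly h x)
          \<and> (\<forall>y\<in>subfield_Fq q. \<forall>x::'a.
                (linearized q m a1 x + linearized q m a2 x * poly h y = 0 \<and> trace_Fq q m x = 0)
                \<longleftrightarrow> x = 0))"
proof -
  obtain k where q: "q = CHAR('a) ^ k" using prime_power_card_imp_CHAR_power assms(1,3) .
  let ?L1 = "linearized q m a1" and ?L2 = "linearized q m a2" and ?T = "trace_Fq q m :: 'a \<Rightarrow> 'a"
  let ?F = "\<lambda>x. ?L1 x + (?L2 x + \<gamma>) * poly h (?T x)"
  let ?g = "\<lambda>y. ?L1 y + (?L2 y + ?T \<gamma>) * poly h y"
  let ?D = "\<lambda>y d. ?L1 d + ?L2 d * poly h y"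
  have h_Fq: "poly h (?T x) \<in> subfield_Fq q" for x
    using assms(6) trace_Fq_in_subfield_Fq[OF q assms(3)] by (intro poly_in_subfield_Fq[OF q]) auto
  have "?T (?F x) = ?g (?T x)" for x
    using trace_Fq_scale[OF q h_Fq[of x], where x = "?L2 x + \<gamma>"]
    by (simp add: trace_Fq_add[OF q] trace_Fq_linearized[OF q] assms(4,5) mult.commute)
  moreover have "?F (x + d) = ?F x + ?D (?T x) d" if "?T d = 0" for x d
    using that by (simp add: linearized_add[OF q] trace_Fq_add[OF q] algebra_simps)
  ultimately have "bij ?F \<longleftrightarrow> bij_betw ?g (range ?T) (range ?T) \<and>
      (\<forall>y\<in>range ?T. \<forall>d. (?D y d = 0 \<and> ?T d = 0) \<longleftrightarrow> d = 0)"
    by (intro bij_iff_bij_on_fibres) (simp_all add: trace_Fq_add[OF q] linearized_0[OF q])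
  then show ?thesis
    using range_trace_Fq[OF q assms(3)] assms(2) by (simp add: is_perm_on_def)
qed

end
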